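(* Let $\Gamma$ be a group and $0\to\mathbb{Z}\to\widehat{\Gamma}\to\Gamma\to1$ a central extension. Let $\widehat{\phi}$ be an automorphism of $\widehat{\Gamma}$ with $\widehat{\phi}(\mathbb{Z})=\mathbb{Z}$, and let $\phi$ be the automorphism of $\Gamma$ induced by $\widehat{\phi}$. Then for every $<\ \in LO_{\mathbb{Z}}(\widehat{\Gamma})$, the order $<_{\widehat{\phi}}$ belongs to $LO_{\mathbb{Z}}(\widehat{\Gamma})$, and $\pi_{\widehat{\Gamma}}^*(<_{\widehat{\phi}}) = \big(\pi_{\widehat{\Gamma}}^*(<)\big)_{\phi}$. That is, $\pi_{\widehat{\Gamma}}^*\circ\widehat{\phi}^* = \phi^*\circ\pi_{\widehat{\Gamma}}^*$ on $LO_{\mathbb{Z}}(\widehat{\Gamma})$, where $\widehat{\phi}^*(<)=<_{\widehat{\phi}}$ and $\phi^*(c)=c_\phi$.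
   Context: A left order on a group is a total order invariant under left multiplication. For an automorphism $\psi$ and a left order $<$, $g_1<_\psi g_2$ iff $\psi(g_1)<\psi(g_2)$. For a circular order $c$ (a map $\Gamma^3\to\{0,\pm1\}$ vanishing on triples with repeated entries, satisfying the cocycle identity $c(g_2,g_3,g_4)-c(g_1,g_3,g_4)+c(g_1,g_2,g_4)-c(g_1,g_2,g_3)=0$ and left invariance), $c_\phi(g_1,g_2,g_3)=c(\phi(g_1),\phi(g_2),\phi(g_3))$. A subgroup $\Lambda$ is cofinal for a left order $<$ on $\widehat{\Gamma}$ if for every $g\in\widehat{\Gamma}$ there exist $\lambda_1,\lambda_2\in\Lambda$ with $\lambda_1<g<\lambda_2$; $LO_{\mathbb{Z}}(\widehat{\Gamma})$ is the set of left orders on $\widehat{\Gamma}$ for which the central subgroup $\mathbb{Z}$ is cofinal. The map $\pi_{\widehat{\Gamma}}^*\colon LO_{\mathbb{Z}}(\widehat{\Gamma})\to CO(\Gamma)$ is defined as follows: given $<$, let $z$ be the generator of $\mathbb{Z}$ with $1<z$; for $\gamma\in\Gamma$ let $\widehat{\gamma}$ be the unique lift of $\gamma$ with $1\le\widehat{\gamma}<z$; for distinct $\gamma_1,\gamma_2,\gamma_3\in\Gamma$ let $\sigma$ be the permutation with $\widehat{\gamma}_{\sigma(1)}<\widehat{\gamma}_{\sigma(2)}<\widehat{\gamma}_{\sigma(3)}$ and set $\pi_{\widehat{\Gamma}}^*(<)(\gamma_1,\gamma_2,\gamma_3)=\mathrm{sign}(\sigma)$; on triples with repeated entries the value is $0$.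 *)

theory Defs
  imports "HOL-Algebra.Algebra" "HOL-Combinatorics.Permutations"
begin

definition left_order :: "('a, 'm) monoid_scheme \<Rightarrow> ('a \<Rightarrow> 'a \<Rightarrow> bool) \<Rightarrow> bool" where
  "left_order G lt \<longleftrightarrow>
     (\<forall>x\<in>carrier G. \<not> lt x x) \<and>
     (\<forall>x\<in>carrier G. \<forall>y\<in>carrier G. \<forall>z\<in>carrier G. lt x y \<longrightarrow> lt y z \<longrightarrow> lt x z) \<and>
     (\<forall>x\<in>carrier G. \<forall>y\<in>carrier G. x \<noteq> y \<longrightarrow> lt x y \<or> lt y x) \<and>
     (\<forall>g\<in>carrier G. \<forall>x\<in>carrier G. \<forall>y\<in>carrier G. lt x y \<longrightarrow> lt (g \<otimes>\<^bsub>G\<^esub> x) (g \<otimes>\<^bsub>G\<^esub> y))"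

definition pull_order :: "('a \<Rightarrow> 'a) \<Rightarrow> ('a \<Rightarrow> 'a \<Rightarrow> bool) \<Rightarrow> ('a \<Rightarrow> 'a \<Rightarrow> bool)" where
  "pull_order psi lt = (\<lambda>x y. lt (psi x) (psi y))"

definition pull_circ :: "('b \<Rightarrow> 'b) \<Rightarrow> ('b \<Rightarrow> 'b \<Rightarrow> 'b \<Rightarrow> int) \<Rightarrow> ('b \<Rightarrow> 'b \<Rightarrow> 'b \<Rightarrow> int)" where
  "pull_circ phi c = (\<lambda>a b d. c (phi a) (phi b) (phi d))"

definition cofinal :: "('a, 'm) monoid_scheme \<Rightarrow> ('a \<Rightarrow> 'a \<Rightarrow> bool) \<Rightarrow> 'a set \<Rightarrow> bool" where
  "cofinal G lt L \<longleftrightarrow> (\<forall>g\<in>carrier G. \<exists>l1\<in>L. \<exists>l2\<in>L. lt l1 g \<and> lt g l2)"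

definition LO_Z :: "('a, 'm) monoid_scheme \<Rightarrow> (int \<Rightarrow> 'a) \<Rightarrow> ('a \<Rightarrow> 'a \<Rightarrow> bool) set" where
  "LO_Z G iota = {lt. left_order G lt \<and> cofinal G lt (range iota)}"

definition pos_gen :: "('a, 'm) monoid_scheme \<Rightarrow> (int \<Rightarrow> 'a) \<Rightarrow> ('a \<Rightarrow> 'a \<Rightarrow> bool) \<Rightarrow> 'a" where
  "pos_gen G iota lt = (THE z. z \<in> {iota 1, iota (-1)} \<and> lt \<one>\<^bsub>G\<^esub> z)"

definition std_lift :: "('a, 'm) monoid_scheme \<Rightarrow> ('a \<Rightarrow> 'b) \<Rightarrow> (int \<Rightarrow> 'a) \<Rightarrow> ('a \<Rightarrow> 'a \<Rightarrow> bool) \<Rightarrow> 'b \<Rightarrow> 'a" where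
  "std_lift G p iota lt \<gamma> =
     (THE x. x \<in> carrier G \<and> p x = \<gamma> \<and> (x = \<one>\<^bsub>G\<^esub> \<or> lt \<one>\<^bsub>G\<^esub> x) \<and> lt x (pos_gen G iota lt))"

definition pi_star :: "('a, 'm) monoid_scheme \<Rightarrow> ('a \<Rightarrow> 'b) \<Rightarrow> (int \<Rightarrow> 'a) \<Rightarrow> ('a \<Rightarrow> 'a \<Rightarrow> bool)
     \<Rightarrow> 'b \<Rightarrow> 'b \<Rightarrow> 'b \<Rightarrow> int" where
  "pi_star G p iota lt \<gamma>1 \<gamma>2 \<gamma>3 =
     (if \<gamma>1 = \<gamma>2 \<or> \<gamma>2 = \<gamma>3 \<or> \<gamma>1 = \<gamma>3 then 0
      else (let \<gamma> = (\<lambda>i::nat. if i = 1 then \<gamma>1 else if i = 2 then \<gamma>2 else \<gamma>3);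
                h = std_lift G p iota lt;
                \<sigma> = (THE \<sigma>. \<sigma> permutes {1, 2, 3} \<and>
                        lt (h (\<gamma> (\<sigma> 1))) (h (\<gamma> (\<sigma> 2))) \<and>
                        lt (h (\<gamma> (\<sigma> 2))) (h (\<gamma> (\<sigma> 3))))
            in sign \<sigma>))"

end

theory Submission
  imports Defs
begin

text \<open>
  Pulling a left order back along an automorphism \<open>\<psi>\<close> with \<open>\<psi>(\<iota> \<int>) = \<iota> \<int>\<close> gives a left
  order for which \<open>\<iota> \<int>\<close> is still cofinal, and since \<open>\<psi>\<close> permutes the two generators
  \<open>\<iota> 1\<close>, \<open>\<iota> (-1)\<close>, it sends the positive generator of the pulled-back order to that of
  the original one. Every fibre of \<open>p\<close> is a coset \<open>\<iota>(\<int>) g\<close>, which by left invariance and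
  cofinality meets the interval \<open>[1, z)\<close>, \<open>z\<close> the positive generator, exactly once; hence \<open>\<psi>\<close> maps the standard lift of
  \<open>\<gamma>\<close> for the pulled-back order to the standard lift of \<open>\<phi> \<gamma>\<close> for the original order.
  The lifts of \<open>\<gamma>\<^sub>1, \<gamma>\<^sub>2, \<gamma>\<^sub>3\<close> are therefore ordered exactly like the lifts of their
  images under \<open>\<phi>\<close>, so both circular orders are given by the same permutation.
\<close>

lemma pull_order_apply: "pull_order \<psi> lt x y \<longleftrightarrow> lt (\<psi> x) (\<psi> y)"
  by (simp add: pull_order_def)

lemma left_order_pull_order:
  assumes "left_order G lt" and "\<psi> \<in> hom G G" and "inj_on \<psi> (carrier G)"
  shows "left_order G (pull_order \<psi> lt)"
proof -
  have \<psi>: "\<psi> x \<in> carrier G" if "x \<in> carrier G" for x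
    using hom_in_carrier[OF assms(2) that] .
  note lo = assms(1)[unfolded left_order_def]
  show ?thesis
    unfolding left_order_def pull_order_def
  proof (intro conjI ballI impI)
    fix x y z
    assume "x \<in> carrier G" "y \<in> carrier G" "z \<in> carrier G"
    then have c: "\<psi> x \<in> carrier G" "\<psi> y \<in> carrier G" "\<psi> z \<in> carrier G" using \<psi> by auto
    show "\<not> lt (\<psi> x) (\<psi> x)" using lo c(1) by blast
    show "lt (\<psi> x) (\<psi> z)" if "lt (\<psi> x) (\<psi> y)" "lt (\<psi> y) (\<psi> z)"
      using lo c that by blast
    show "lt (\<psi> x) (\<psi> y) \<or> lt (\<psi> y) (\<psi> x)" if "x \<noteq> y"
      using lo c(1,2) that assms(3) \<open>x \<in> carrier G\<close> \<open>y \<in> carrier G\<close>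
      unfolding inj_on_def by blast
    show "lt (\<psi> (z \<otimes>\<^bsub>G\<^esub> x)) (\<psi> (z \<otimes>\<^bsub>G\<^esub> y))" if "lt (\<psi> x) (\<psi> y)"
    proof -
      have "lt (\<psi> z \<otimes>\<^bsub>G\<^esub> \<psi> x) (\<psi> z \<otimes>\<^bsub>G\<^esub> \<psi> y)"
        using lo c that by blast
      then show ?thesis
        using hom_mult[OF assms(2)] \<open>x \<in> carrier G\<close> \<open>y \<in> carrier G\<close> \<open>z \<in> carrier G\<close>
        by simp
    qed
  qed
qed

lemma cofinal_pull_order:
  assumes "cofinal G lt L" and "\<psi> ` carrier G \<subseteq> carrier G" and "L \<subseteq> \<psi> ` L"
  shows "cofinal G (pull_order \<psi> lt) L"
  unfolding cofinal_def pull_order_def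
proof
  fix g assume "g \<in> carrier G"
  then obtain l1 l2 where "l1 \<in> L" "l2 \<in> L" "lt l1 (\<psi> g)" "lt (\<psi> g) l2"
    using assms(1,2) unfolding cofinal_def by blast
  with assms(3) show "\<exists>l1\<in>L. \<exists>l2\<in>L. lt (\<psi> l1) (\<psi> g) \<and> lt (\<psi> g) (\<psi> l2)"
    by blast
qed

lemma LO_Z_pull_order:
  assumes "lt \<in> LO_Z G \<iota>" and "\<psi> \<in> hom G G" and "inj_on \<psi> (carrier G)"
    and "range \<iota> \<subseteq> \<psi> ` range \<iota>"
  shows "pull_order \<psi> lt \<in> LO_Z G \<iota>"
proof -
  have "\<psi> ` carrier G \<subseteq> carrier G"
    using hom_in_carrier[OF assms(2)] by blast
  then show ?thesis
    using assms(1) left_order_pull_order[OF _ assms(2,3)] cofinal_pull_order[OF _ _ assms(4)]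
    unfolding LO_Z_def by blast
qed

lemma bij_betw_The:
  assumes "bij_betw f A B" and "\<exists>!y. P y" and "\<And>y. P y \<Longrightarrow> y \<in> B"
  shows "f (THE x. x \<in> A \<and> P (f x)) = (THE y. P y)"
proof -
  obtain y where y: "P y" using assms(2) by blast
  then obtain x where x: "x \<in> A" "f x = y"
    using assms(1,3) unfolding bij_betw_def by blast
  have "(THE x. x \<in> A \<and> P (f x)) = x"
  proof (rule the_equality)
    show "x \<in> A \<and> P (f x)" using x y by simp
    fix x' assume "x' \<in> A \<and> P (f x')"
    then show "x' = x"
      using assms(1,2) x y unfolding bij_betw_def inj_on_def by blast
  qed
  moreover have "(THE y. P y) = y"
    by (rule the1_equality[OF assms(2) y])
  ultimately show ?thesis using x by simp
qed

lemma (in group_hom) hom_eq_iff_kernel: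
  assumes "x \<in> carrier G" and "y \<in> carrier G"
  shows "h x = h y \<longleftrightarrow> x \<otimes> inv y \<in> kernel G H h"
proof -
  have "x \<otimes> inv y \<in> kernel G H h \<longleftrightarrow> h x \<otimes>\<^bsub>H\<^esub> inv\<^bsub>H\<^esub> h y = \<one>\<^bsub>H\<^esub>"
    using assms by (simp add: kernel_def)
  also have "\<dots> \<longleftrightarrow> h x = h y"
    using assms H.inv_solve_right'[of "\<one>\<^bsub>H\<^esub>" "h x" "h y"] by simp
  finally show ?thesis by simp
qed

lemma (in group_hom) hom_eq_iff_kernel_invariant_iso:
  assumes "\<psi> \<in> iso G G" and "\<psi> ` kernel G H h = kernel G H h"
    and "x \<in> carrier G" and "y \<in> carrier G"
  shows "h (\<psi> x) = h (\<psi> y) \<longleftrightarrow> h x = h y"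
proof -
  interpret \<psi>: group_hom G G \<psi>
    using assms(1) G.group_axioms unfolding iso_def group_hom_def group_hom_axioms_def by blast
  have inj: "inj_on \<psi> (carrier G)" using assms(1) unfolding iso_def bij_betw_def by blast
  have ker: "\<psi> a \<in> kernel G H h \<longleftrightarrow> a \<in> kernel G H h" if "a \<in> carrier G" for a
  proof
    assume "\<psi> a \<in> kernel G H h"
    then obtain k where k: "k \<in> kernel G H h" "\<psi> a = \<psi> k"
      using assms(2) by (metis imageE)
    then have "k \<in> carrier G" by (simp add: kernel_def)
    with k inj that show "a \<in> kernel G H h" by (metis inj_onD)
  next
    assume "a \<in> kernel G H h"
    then show "\<psi> a \<in> kernel G H h" using assms(2) by blast
  qed
  have "h (\<psi> x) = h (\<psi> y) \<longleftrightarrow> \<psi> x \<otimes> inv (\<psi> y) \<in> kernel G H h"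
    using assms(3,4) by (intro hom_eq_iff_kernel) simp_all
  also have "\<dots> \<longleftrightarrow> \<psi> (x \<otimes> inv y) \<in> kernel G H h"
    using assms(3,4) by simp
  also have "\<dots> \<longleftrightarrow> x \<otimes> inv y \<in> kernel G H h"
    using assms(3,4) by (intro ker) simp
  also have "\<dots> \<longleftrightarrow> h x = h y"
    using hom_eq_iff_kernel[OF assms(3,4)] by (rule sym)
  finally show ?thesis .
qed

lemma (in group) hom_integer_group_eq_int_pow:
  assumes "\<iota> \<in> hom integer_group G"
  shows "\<iota> n = \<iota> 1 [^] n"
proof -
  have "\<iota> (1 [^]\<^bsub>integer_group\<^esub> n) = \<iota> 1 [^] n"
    by (rule hom_int_pow[OF assms]) (simp_all add: group_axioms)
  then show ?thesis by simp
qed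

lemma (in group) range_int_pow_generator:
  assumes "\<iota> \<in> hom integer_group G" and "z \<in> {\<iota> 1, \<iota> (-1)}"
  shows "range (\<lambda>n::int. z [^] n) = range \<iota>"
proof -
  obtain s :: int where s: "s \<in> {1, -1}" "z = \<iota> s" using assms(2) by blast
  have pow: "(\<lambda>n::int. z [^] n) = (\<lambda>n. \<iota> (s * n))"
  proof
    fix n :: int
    have "\<iota> 1 \<in> carrier G" using hom_in_carrier[OF assms(1)] by simp
    moreover have "z = \<iota> 1 [^] s"
      using s(2) hom_integer_group_eq_int_pow[OF assms(1), of s] by simp
    ultimately have "z [^] n = \<iota> 1 [^] (s * n)" by (simp add: int_pow_pow)
    then show "z [^] n = \<iota> (s * n)"
      using hom_integer_group_eq_int_pow[OF assms(1), of "s * n"] by simp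
  qed
  have "\<iota> m \<in> range (\<lambda>n. \<iota> (s * n))" for m
  proof -
    have "s * (s * m) = m" using s(1) by auto
    then show ?thesis by (metis rangeI)
  qed
  then show ?thesis unfolding pow by blast
qed

lemma (in group) hom_image_generator:
  assumes "\<iota> \<in> hom integer_group G" and "inj \<iota>"
    and "\<psi> \<in> hom G G" and "\<psi> ` range \<iota> = range \<iota>"
    and "z \<in> {\<iota> 1, \<iota> (-1)}"
  shows "\<psi> z \<in> {\<iota> 1, \<iota> (-1)}"
proof -
  interpret \<psi>: group_hom G G \<psi>
    using assms(3) group_axioms unfolding group_hom_def group_hom_axioms_def by blast
  have \<iota>1: "\<iota> 1 \<in> carrier G" using hom_in_carrier[OF assms(1)] by simp
  have "\<psi> (\<iota> 1) \<in> \<psi> ` range \<iota>" by (intro imageI rangeI)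
  then have "\<psi> (\<iota> 1) \<in> range \<iota>" unfolding assms(4) .
  then obtain k where k: "\<psi> (\<iota> 1) = \<iota> k" by blast
  have \<psi>\<iota>: "\<psi> (\<iota> n) = \<iota> (k * n)" for n
  proof -
    have "\<psi> (\<iota> n) = \<psi> (\<iota> 1) [^] n"
      using hom_integer_group_eq_int_pow[OF assms(1), of n] \<iota>1 by (simp add: \<psi>.hom_int_pow)
    also have "\<dots> = \<iota> 1 [^] (k * n)"
      using k hom_integer_group_eq_int_pow[OF assms(1), of k] \<iota>1 by (simp add: int_pow_pow)
    also have "\<dots> = \<iota> (k * n)"
      using hom_integer_group_eq_int_pow[OF assms(1), of "k * n"] by simp
    finally show ?thesis .
  qed
  have "\<iota> 1 \<in> \<psi> ` range \<iota>"
    unfolding assms(4) by (rule rangeI)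
  then obtain m where "\<iota> 1 = \<psi> (\<iota> m)" by blast
  then have "\<iota> 1 = \<iota> (k * m)" using \<psi>\<iota> by simp
  then have "k * m = 1" using inj_eq[OF assms(2)] by simp
  then have "k = 1 \<or> k = -1" by (auto simp: zmult_eq_1_iff)
  then show ?thesis
    using assms(5) \<psi>\<iota>[of 1] \<psi>\<iota>[of "-1"] by auto
qed

locale left_ordered_group = group G for G (structure) +
  fixes lt :: "'a \<Rightarrow> 'a \<Rightarrow> bool"
  assumes left_order: "left_order G lt"
begin

abbreviation le :: "'a \<Rightarrow> 'a \<Rightarrow> bool"
  where "le x y \<equiv> x = y \<or> lt x y"

lemma less_irrefl: "x \<in> carrier G \<Longrightarrow> \<not> lt x x"
  using left_order unfolding left_order_def by blast

lemma less_trans: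
  "\<lbrakk>lt x y; lt y z; x \<in> carrier G; y \<in> carrier G; z \<in> carrier G\<rbrakk> \<Longrightarrow> lt x z"
  using left_order unfolding left_order_def by blast

lemma less_linear: "\<lbrakk>x \<in> carrier G; y \<in> carrier G\<rbrakk> \<Longrightarrow> lt x y \<or> x = y \<or> lt y x"
  using left_order unfolding left_order_def by blast

lemma mult_left_strict_mono:
  "\<lbrakk>lt x y; g \<in> carrier G; x \<in> carrier G; y \<in> carrier G\<rbrakk> \<Longrightarrow> lt (g \<otimes> x) (g \<otimes> y)"
  using left_order unfolding left_order_def by blast

lemma not_less: "\<lbrakk>x \<in> carrier G; y \<in> carrier G\<rbrakk> \<Longrightarrow> \<not> lt x y \<longleftrightarrow> le y x"
  using less_irrefl less_trans less_linear by blast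

lemma le_less_trans:
  "\<lbrakk>le x y; lt y z; x \<in> carrier G; y \<in> carrier G; z \<in> carrier G\<rbrakk> \<Longrightarrow> lt x z"
  using less_trans by blast

lemma mult_left_mono:
  "\<lbrakk>le x y; g \<in> carrier G; x \<in> carrier G; y \<in> carrier G\<rbrakk> \<Longrightarrow> le (g \<otimes> x) (g \<otimes> y)"
  using mult_left_strict_mono by blast

lemma one_less_inv_iff: "x \<in> carrier G \<Longrightarrow> lt \<one> (inv x) \<longleftrightarrow> lt x \<one>"
  using mult_left_strict_mono[of \<one> "inv x" x] mult_left_strict_mono[of x \<one> "inv x"] by auto

lemma one_less_int_pow:
  fixes n :: int
  assumes "z \<in> carrier G" and "lt \<one> z" and "0 < n"
  shows "lt \<one> (z [^] n)"
  using assms(3)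
proof (induction n rule: int_gr_induct)
  case base
  then show ?case using assms by simp
next
  case (step i)
  have "lt (z [^] i \<otimes> \<one>) (z [^] i \<otimes> z)"
    using mult_left_strict_mono[OF assms(2)] assms(1) by simp
  then have "lt (z [^] i) (z [^] (i + 1))"
    using assms(1) by (simp add: int_pow_mult)
  with step.IH show ?case
    using assms(1) less_trans by blast
qed

lemma int_pow_strict_mono:
  fixes a b :: int
  assumes "z \<in> carrier G" and "lt \<one> z" and "a < b"
  shows "lt (z [^] a) (z [^] b)"
proof -
  have "lt (z [^] a \<otimes> \<one>) (z [^] a \<otimes> z [^] (b - a))"
    using assms by (intro mult_left_strict_mono one_less_int_pow) simp_all
  then show ?thesis
    using assms(1) by (simp flip: int_pow_mult)
qed

lemma int_pow_mono:
  "\<lbrakk>z \<in> carrier G; lt \<one> z; a \<le> (b::int)\<rbrakk> \<Longrightarrow> le (z [^] a) (z [^] b)"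
  using int_pow_strict_mono by (cases "a = b") auto

lemma ex_int_pow_floor:
  assumes "z \<in> carrier G" and "lt \<one> z" and "cofinal G lt (range (\<lambda>n::int. z [^] n))"
    and "g \<in> carrier G"
  shows "\<exists>k::int. le (z [^] k) g \<and> lt g (z [^] (k + 1))"
proof (rule ccontr)
  assume none: "\<nexists>k::int. le (z [^] k) g \<and> lt g (z [^] (k + 1))"
  obtain a b :: int where a: "lt (z [^] a) g" and b: "lt g (z [^] b)"
    using assms(3,4) unfolding cofinal_def by blast
  have "le (z [^] k) g" if "a \<le> k" for k
    using that
  proof (induction k rule: int_ge_induct)
    case base
    then show ?case using a by simp
  next
    case (step k)
    then show ?case using none not_less assms(1,4) by blast
  qed
  then have "le (z [^] max a b) g" by simp
  moreover have "le (z [^] b) (z [^] max a b)"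
    using int_pow_mono assms(1,2) by simp
  ultimately have "le (z [^] b) g"
    using less_trans assms(1,4) by auto
  then show False
    using b not_less assms(1,4) by blast
qed

lemma ex1_int_pow_translate:
  assumes "z \<in> carrier G" and "lt \<one> z" and "cofinal G lt (range (\<lambda>n::int. z [^] n))"
    and "g \<in> carrier G"
  shows "\<exists>!x. (\<exists>n::int. x = z [^] n \<otimes> g) \<and> le \<one> x \<and> lt x z"
proof (rule ex_ex1I)
  obtain k :: int where k: "le (z [^] k) g" "lt g (z [^] (k + 1))"
    using ex_int_pow_floor assms by blast
  have "le (z [^] (-k) \<otimes> z [^] k) (z [^] (-k) \<otimes> g)"
    using mult_left_mono[OF k(1)] assms(1,4) by simp
  moreover have "lt (z [^] (-k) \<otimes> g) (z [^] (-k) \<otimes> z [^] (k + 1))"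
    using mult_left_strict_mono[OF k(2)] assms(1,4) by simp
  ultimately have "le \<one> (z [^] (-k) \<otimes> g) \<and> lt (z [^] (-k) \<otimes> g) z"
    using assms(1) by (simp flip: int_pow_mult)
  then show "\<exists>x. (\<exists>n::int. x = z [^] n \<otimes> g) \<and> le \<one> x \<and> lt x z"
    by blast
next
  have no_shift: False
    if "le \<one> x" "lt (z [^] d \<otimes> x) z" "0 < d" "x \<in> carrier G" for x and d :: int
  proof -
    have "le (z [^] d) (z [^] d \<otimes> x)"
      using mult_left_mono[of \<one> x "z [^] d"] that assms(1) by simp
    then have "lt (z [^] d) z"
      by (rule le_less_trans[OF _ that(2)]) (simp_all add: that(4) assms(1))
    moreover have "le z (z [^] d)"
      using int_pow_mono[of z 1 d] that(3) assms(1,2) by simp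
    ultimately show False
      using not_less[of "z [^] d" z] assms(1) by simp
  qed
  fix x y
  assume x: "(\<exists>n::int. x = z [^] n \<otimes> g) \<and> le \<one> x \<and> lt x z"
    and y: "(\<exists>n::int. y = z [^] n \<otimes> g) \<and> le \<one> y \<and> lt y z"
  then obtain n m :: int where n: "x = z [^] n \<otimes> g" and m: "y = z [^] m \<otimes> g"
    by blast
  have yx: "y = z [^] (m - n) \<otimes> x" and xy: "x = z [^] (n - m) \<otimes> y"
    using assms(1,4) by (simp_all add: n m int_pow_mult [symmetric] m_assoc [symmetric])
  have xc: "x \<in> carrier G" and yc: "y \<in> carrier G"
    using n m assms(1,4) by simp_all
  consider "m = n" | "n < m" | "m < n" by linarith
  then show "x = y"
  proof cases
    case 1
    then show ?thesis using n m by simp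
  next
    case 2
    have "lt (z [^] (m - n) \<otimes> x) z" using y by (simp flip: yx)
    then show ?thesis using no_shift[of x "m - n"] x xc 2 by simp
  next
    case 3
    have "lt (z [^] (n - m) \<otimes> y) z" using x by (simp flip: xy)
    then show ?thesis using no_shift[of y "n - m"] y yc 3 by simp
  qed
qed

lemma ex1_positive_generator:
  assumes "\<iota> \<in> hom integer_group G" and "inj \<iota>"
  shows "\<exists>!z. z \<in> {\<iota> 1, \<iota> (-1)} \<and> lt \<one> z"
proof -
  interpret \<iota>: group_hom integer_group G \<iota>
    using assms(1) group_axioms unfolding group_hom_def group_hom_axioms_def by simp
  have inv: "\<iota> (-1) = inv (\<iota> 1)"
    using \<iota>.hom_inv[of 1] by simp
  have ne: "\<iota> 1 \<noteq> \<one>" "\<iota> 1 \<noteq> \<iota> (-1)"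
    using \<iota>.hom_one inj_eq[OF assms(2), of 1 0] inj_eq[OF assms(2), of 1 "-1"] by simp_all
  have \<iota>1: "\<iota> 1 \<in> carrier G" by simp
  have "lt \<one> (\<iota> 1) \<or> lt \<one> (\<iota> (-1))"
    unfolding inv one_less_inv_iff[OF \<iota>1] using less_linear[OF \<iota>1 one_closed] ne(1) by blast
  moreover have "\<not> (lt \<one> (\<iota> 1) \<and> lt \<one> (\<iota> (-1)))"
    unfolding inv one_less_inv_iff[OF \<iota>1]
    using less_trans[OF _ _ \<iota>1 one_closed \<iota>1] less_irrefl[OF \<iota>1] by blast
  ultimately show ?thesis
    using ne(2) by blast
qed

lemma pos_gen_positive_generator:
  assumes "\<iota> \<in> hom integer_group G" and "inj \<iota>"
  shows "pos_gen G \<iota> lt \<in> {\<iota> 1, \<iota> (-1)}" and "lt \<one> (pos_gen G \<iota> lt)"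
  using theI'[OF ex1_positive_generator[OF assms]] unfolding pos_gen_def by simp_all

lemma pos_gen_eqI:
  assumes "\<iota> \<in> hom integer_group G" and "inj \<iota>"
    and "z \<in> {\<iota> 1, \<iota> (-1)}" and "lt \<one> z"
  shows "pos_gen G \<iota> lt = z"
  unfolding pos_gen_def using the1_equality[OF ex1_positive_generator[OF assms(1,2)]] assms(3,4)
  by blast

lemma pos_gen_pull_order:
  assumes "\<iota> \<in> hom integer_group G" and "inj \<iota>"
    and "\<psi> \<in> hom G G" and "inj_on \<psi> (carrier G)" and "\<psi> ` range \<iota> = range \<iota>"
  shows "\<psi> (pos_gen G \<iota> (pull_order \<psi> lt)) = pos_gen G \<iota> lt"
proof -
  interpret \<psi>: group_hom G G \<psi>
    using assms(3) group_axioms unfolding group_hom_def group_hom_axioms_def by blast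
  interpret pulled: left_ordered_group G "pull_order \<psi> lt"
    using left_order_pull_order[OF left_order assms(3,4)] by unfold_locales
  let ?z = "pos_gen G \<iota> (pull_order \<psi> lt)"
  have "\<psi> ?z \<in> {\<iota> 1, \<iota> (-1)}"
    using hom_image_generator[OF assms(1,2,3,5) pulled.pos_gen_positive_generator(1)[OF assms(1,2)]] .
  moreover have "lt \<one> (\<psi> ?z)"
    using pulled.pos_gen_positive_generator(2)[OF assms(1,2)] unfolding pull_order_apply \<psi>.hom_one .
  ultimately show ?thesis
    by (rule pos_gen_eqI[OF assms(1,2), symmetric])
qed

end

lemma pi_star_eqI:
  assumes "inj_on f {\<gamma>1, \<gamma>2, \<gamma>3}"
    and "\<And>x y. x \<in> {\<gamma>1, \<gamma>2, \<gamma>3} \<Longrightarrow> y \<in> {\<gamma>1, \<gamma>2, \<gamma>3} \<Longrightarrow>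
      lt' (std_lift G' p' \<iota>' lt' x) (std_lift G' p' \<iota>' lt' y)
      \<longleftrightarrow> lt (std_lift G p \<iota> lt (f x)) (std_lift G p \<iota> lt (f y))"
  shows "pi_star G' p' \<iota>' lt' \<gamma>1 \<gamma>2 \<gamma>3 = pi_star G p \<iota> lt (f \<gamma>1) (f \<gamma>2) (f \<gamma>3)"
proof -
  let ?\<gamma> = "\<lambda>i::nat. if i = 1 then \<gamma>1 else if i = 2 then \<gamma>2 else \<gamma>3"
  have distinct: "(\<gamma>1 = \<gamma>2 \<or> \<gamma>2 = \<gamma>3 \<or> \<gamma>1 = \<gamma>3) \<longleftrightarrow> (f \<gamma>1 = f \<gamma>2 \<or> f \<gamma>2 = f \<gamma>3 \<or> f \<gamma>1 = f \<gamma>3)"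
    using assms(1) unfolding inj_on_def by auto
  have f\<gamma>: "f (?\<gamma> i) = (if i = 1 then f \<gamma>1 else if i = 2 then f \<gamma>2 else f \<gamma>3)" for i
    by simp
  have order: "lt' (std_lift G' p' \<iota>' lt' (?\<gamma> i)) (std_lift G' p' \<iota>' lt' (?\<gamma> j))
      \<longleftrightarrow> lt (std_lift G p \<iota> lt (f (?\<gamma> i))) (std_lift G p \<iota> lt (f (?\<gamma> j)))" for i j
    by (rule assms(2)) simp_all
  show ?thesis
    unfolding pi_star_def Let_def by (simp only: order f\<gamma> distinct)
qed

locale int_extension = group_hom G H p
  for G :: "('a, 'm) monoid_scheme" and H :: "('b, 'n) monoid_scheme" and p +
  fixes \<iota> :: "int \<Rightarrow> 'a"
  assumes surj: "p ` carrier G = carrier H"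
    and \<iota>_hom: "\<iota> \<in> hom integer_group G" and \<iota>_inj: "inj \<iota>"
    and kernel_eq: "kernel G H p = range \<iota>"
begin

lemma fibre_iff_int_pow_translate:
  assumes "z \<in> {\<iota> 1, \<iota> (-1)}" and "x \<in> carrier G" and "g \<in> carrier G"
  shows "p x = p g \<longleftrightarrow> (\<exists>n::int. x = z [^]\<^bsub>G\<^esub> n \<otimes>\<^bsub>G\<^esub> g)"
proof -
  have z: "z \<in> carrier G" using assms(1) hom_in_carrier[OF \<iota>_hom] by auto
  have "p x = p g \<longleftrightarrow> (\<exists>n::int. x \<otimes>\<^bsub>G\<^esub> inv\<^bsub>G\<^esub> g = z [^]\<^bsub>G\<^esub> n)"
    using hom_eq_iff_kernel[OF assms(2,3)]
    unfolding kernel_eq G.range_int_pow_generator[OF \<iota>_hom assms(1), symmetric] by blast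
  also have "\<dots> \<longleftrightarrow> (\<exists>n::int. x = z [^]\<^bsub>G\<^esub> n \<otimes>\<^bsub>G\<^esub> g)"
    using G.inv_solve_right' assms(2,3) z by auto
  finally show ?thesis .
qed

lemma ex1_std_lift:
  assumes "lt \<in> LO_Z G \<iota>" and "\<gamma> \<in> carrier H"
  shows "\<exists>!x. x \<in> carrier G \<and> p x = \<gamma> \<and> (x = \<one>\<^bsub>G\<^esub> \<or> lt \<one>\<^bsub>G\<^esub> x) \<and> lt x (pos_gen G \<iota> lt)"
proof -
  interpret left_ordered_group G lt
    using assms(1) unfolding LO_Z_def by unfold_locales simp
  let ?z = "pos_gen G \<iota> lt"
  have z: "?z \<in> {\<iota> 1, \<iota> (-1)}" "lt \<one>\<^bsub>G\<^esub> ?z"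
    using pos_gen_positive_generator[OF \<iota>_hom \<iota>_inj] by simp_all
  then have zc: "?z \<in> carrier G" using hom_in_carrier[OF \<iota>_hom] by auto
  have "cofinal G lt (range (\<lambda>n::int. ?z [^]\<^bsub>G\<^esub> n))"
    using assms(1) G.range_int_pow_generator[OF \<iota>_hom z(1)] unfolding LO_Z_def by simp
  moreover obtain g where g: "g \<in> carrier G" "\<gamma> = p g"
    using assms(2) unfolding surj[symmetric] by blast
  ultimately have translates:
      "\<exists>!x. (\<exists>n::int. x = ?z [^]\<^bsub>G\<^esub> n \<otimes>\<^bsub>G\<^esub> g) \<and> le \<one>\<^bsub>G\<^esub> x \<and> lt x ?z"
    using ex1_int_pow_translate zc z(2) by blast
  have fibre: "x \<in> carrier G \<and> p x = \<gamma> \<longleftrightarrow> (\<exists>n::int. x = ?z [^]\<^bsub>G\<^esub> n \<otimes>\<^bsub>G\<^esub> g)" for x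
  proof
    assume "x \<in> carrier G \<and> p x = \<gamma>"
    then show "\<exists>n::int. x = ?z [^]\<^bsub>G\<^esub> n \<otimes>\<^bsub>G\<^esub> g"
      using fibre_iff_int_pow_translate[OF z(1) _ g(1)] g(2) by blast
  next
    assume translate: "\<exists>n::int. x = ?z [^]\<^bsub>G\<^esub> n \<otimes>\<^bsub>G\<^esub> g"
    then have "x \<in> carrier G" using g(1) zc by auto
    with translate show "x \<in> carrier G \<and> p x = \<gamma>"
      using fibre_iff_int_pow_translate[OF z(1) _ g(1)] g(2) by blast
  qed
  then have "(\<exists>n::int. x = ?z [^]\<^bsub>G\<^esub> n \<otimes>\<^bsub>G\<^esub> g) \<and> le \<one>\<^bsub>G\<^esub> x \<and> lt x ?z
    \<longleftrightarrow> x \<in> carrier G \<and> p x = \<gamma> \<and> (x = \<one>\<^bsub>G\<^esub> \<or> lt \<one>\<^bsub>G\<^esub> x) \<and> lt x ?z" for x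
    \<comment> \<open>\<open>le \<one> x\<close> unfolds to \<open>\<one> = x \<or> \<dots>\<close>, whereas \<open>std_lift\<close> is stated with \<open>x = \<one>\<close>\<close>
    unfolding eq_commute[of "\<one>\<^bsub>G\<^esub>" x] using fibre[of x] by blast
  then show ?thesis
    using translates by (simp only:)
qed

lemma inj_on_induced_map:
  assumes "\<psi> \<in> iso G G" and "\<psi> ` range \<iota> = range \<iota>"
    and "\<And>g. g \<in> carrier G \<Longrightarrow> \<phi> (p g) = p (\<psi> g)"
  shows "inj_on \<phi> (carrier H)"
proof (rule inj_onI)
  fix a b
  assume a: "a \<in> carrier H" and b: "b \<in> carrier H" and eq: "\<phi> a = \<phi> b"
  obtain x where x: "x \<in> carrier G" "a = p x"
    using a unfolding surj[symmetric] by blast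
  obtain y where y: "y \<in> carrier G" "b = p y"
    using b unfolding surj[symmetric] by blast
  show "a = b"
    using hom_eq_iff_kernel_invariant_iso[OF assms(1), unfolded kernel_eq, OF assms(2) x(1) y(1)]
      eq assms(3) x y by simp
qed

lemma std_lift_pull_order:
  assumes "lt \<in> LO_Z G \<iota>" and "\<psi> \<in> iso G G" and "\<psi> ` range \<iota> = range \<iota>"
    and "\<And>g. g \<in> carrier G \<Longrightarrow> \<phi> (p g) = p (\<psi> g)" and "\<gamma> \<in> carrier H"
  shows "\<psi> (std_lift G p \<iota> (pull_order \<psi> lt) \<gamma>) = std_lift G p \<iota> lt (\<phi> \<gamma>)"
proof -
  have \<psi>_hom: "\<psi> \<in> hom G G" and \<psi>_bij: "bij_betw \<psi> (carrier G) (carrier G)"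
    using assms(2) unfolding iso_def by auto
  then have \<psi>_inj: "inj_on \<psi> (carrier G)" unfolding bij_betw_def by simp
  interpret \<psi>: group_hom G G \<psi>
    using \<psi>_hom G.group_axioms unfolding group_hom_def group_hom_axioms_def by blast
  interpret left_ordered_group G lt
    using assms(1) unfolding LO_Z_def by unfold_locales simp
  obtain g where g: "g \<in> carrier G" "\<gamma> = p g"
    using assms(5) unfolding surj[symmetric] by blast
  have \<phi>\<gamma>: "\<phi> \<gamma> = p (\<psi> g)" using assms(4) g by simp
  define P where "P y \<longleftrightarrow>
      y \<in> carrier G \<and> p y = \<phi> \<gamma> \<and> (y = \<one>\<^bsub>G\<^esub> \<or> lt \<one>\<^bsub>G\<^esub> y) \<and> lt y (pos_gen G \<iota> lt)" for y
  have pulled: "x \<in> carrier G \<and> p x = \<gamma> \<and> (x = \<one>\<^bsub>G\<^esub> \<or> pull_order \<psi> lt \<one>\<^bsub>G\<^esub> x)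
      \<and> pull_order \<psi> lt x (pos_gen G \<iota> (pull_order \<psi> lt))
    \<longleftrightarrow> x \<in> carrier G \<and> P (\<psi> x)" for x
  proof (cases "x \<in> carrier G")
    case True
    have "p x = \<gamma> \<longleftrightarrow> p (\<psi> x) = \<phi> \<gamma>"
      using hom_eq_iff_kernel_invariant_iso[OF assms(2), unfolded kernel_eq, OF assms(3) True g(1)]
        g(2) \<phi>\<gamma> by simp
    moreover have "x = \<one>\<^bsub>G\<^esub> \<longleftrightarrow> \<psi> x = \<one>\<^bsub>G\<^esub>"
      using inj_on_eq_iff[OF \<psi>_inj True G.one_closed] by simp
    ultimately show ?thesis
      unfolding P_def pull_order_apply \<psi>.hom_one
        pos_gen_pull_order[OF \<iota>_hom \<iota>_inj \<psi>_hom \<psi>_inj assms(3)]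
      using True \<psi>.hom_closed by blast
  qed simp
  have "\<exists>!y. P y"
    unfolding P_def using ex1_std_lift[OF assms(1)] g(1) \<phi>\<gamma> by simp
  then have "\<psi> (THE x. x \<in> carrier G \<and> P (\<psi> x)) = (THE y. P y)"
    by (rule bij_betw_The[OF \<psi>_bij]) (simp add: P_def)
  then show ?thesis
    unfolding std_lift_def pulled P_def .
qed

lemma pi_star_pull_order:
  assumes "lt \<in> LO_Z G \<iota>" and "\<psi> \<in> iso G G" and "\<psi> ` range \<iota> = range \<iota>"
    and "\<And>g. g \<in> carrier G \<Longrightarrow> \<phi> (p g) = p (\<psi> g)"
    and "\<gamma>1 \<in> carrier H" and "\<gamma>2 \<in> carrier H" and "\<gamma>3 \<in> carrier H"
  shows "pi_star G p \<iota> (pull_order \<psi> lt) \<gamma>1 \<gamma>2 \<gamma>3 = pi_star G p \<iota> lt (\<phi> \<gamma>1) (\<phi> \<gamma>2) (\<phi> \<gamma>3)"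
proof (rule pi_star_eqI)
  have "{\<gamma>1, \<gamma>2, \<gamma>3} \<subseteq> carrier H"
    using assms(5-7) by simp
  with inj_on_induced_map[OF assms(2-4)] show "inj_on \<phi> {\<gamma>1, \<gamma>2, \<gamma>3}"
    by (rule inj_on_subset)
next
  fix x y
  assume "x \<in> {\<gamma>1, \<gamma>2, \<gamma>3}" and "y \<in> {\<gamma>1, \<gamma>2, \<gamma>3}"
  then have "x \<in> carrier H" and "y \<in> carrier H"
    using assms(5-7) by auto
  then show "pull_order \<psi> lt (std_lift G p \<iota> (pull_order \<psi> lt) x)
        (std_lift G p \<iota> (pull_order \<psi> lt) y)
      \<longleftrightarrow> lt (std_lift G p \<iota> lt (\<phi> x)) (std_lift G p \<iota> lt (\<phi> y))"
    by (simp only: pull_order_apply std_lift_pull_order[OF assms(1-4)])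
qed

end

theorem lemma4p3:
  fixes G :: "('a, 'm) monoid_scheme" and H :: "('b, 'n) monoid_scheme"
    and p :: "'a \<Rightarrow> 'b" and iota :: "int \<Rightarrow> 'a"
    and phihat :: "'a \<Rightarrow> 'a" and phi :: "'b \<Rightarrow> 'b"
    and lt :: "'a \<Rightarrow> 'a \<Rightarrow> bool"
  assumes "group G" and "group H"
    and "p \<in> hom G H" and "p ` carrier G = carrier H"
    and "iota \<in> hom integer_group G" and "inj iota"
    and "kernel G H p = range iota"
    and "\<And>n g. g \<in> carrier G \<Longrightarrow> iota n \<otimes>\<^bsub>G\<^esub> g = g \<otimes>\<^bsub>G\<^esub> iota n"
    and "phihat \<in> iso G G" and "phihat ` range iota = range iota"
    and "\<And>g. g \<in> carrier G \<Longrightarrow> phi (p g) = p (phihat g)"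
    and "lt \<in> LO_Z G iota"
  shows "pull_order phihat lt \<in> LO_Z G iota \<and>
    (\<forall>\<gamma>1\<in>carrier H. \<forall>\<gamma>2\<in>carrier H. \<forall>\<gamma>3\<in>carrier H.
       pi_star G p iota (pull_order phihat lt) \<gamma>1 \<gamma>2 \<gamma>3
       = pull_circ phi (pi_star G p iota lt) \<gamma>1 \<gamma>2 \<gamma>3)"
proof -
  interpret int_extension G H p iota
    using assms(1-7)
    unfolding int_extension_def int_extension_axioms_def group_hom_def group_hom_axioms_def
    by blast
  have hom: "phihat \<in> hom G G" and inj: "inj_on phihat (carrier G)"
    using assms(9) unfolding iso_def bij_betw_def by auto
  have "pull_order phihat lt \<in> LO_Z G iota"
    using LO_Z_pull_order[OF assms(12) hom inj] assms(10) by simp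
  then show ?thesis
    using pi_star_pull_order[OF assms(12,9,10,11)] by (simp add: pull_circ_def)
qed

end
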